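(* Let $n\ge1$ and $\kappa\in I'_n$. Then $$\frac{1}{(2\pi)^n}\,c^{(n)}_\kappa\,\mathbf{e}\!\left[\frac12\sum_{l=1}^n\left(\omega^{(n)}_{\kappa,l}-\frac12\right)\right]\frac{1}{d_n}\,c^{(n)}_{d_n-\kappa}=\frac{1}{d_n}\,p_n\!\left(\mathbf{e}\!\left[(-1)^{n-1}\omega^{(n)}_{\kappa,1}\right]\right).$$
   Context: Fix integers $a_1,\dots,a_n\ge2$, $d_0=1$, $d_i=a_1\cdots a_i$, $\mathbf{e}[\alpha]=\exp(2\pi\sqrt{-1}\alpha)$. $I'_n=\{\kappa\in\{1,\dots,d_n\}\mid a_n\nmid\kappa\}$ (note $d_n-\kappa\in I'_n$ for $\kappa\in I'_n$). For $\kappa\in I'_n$, $\omega^{(n)}_{\kappa,i}=(-1)^{i-1}\frac{d_{i-1}}{d_n}\kappa-\lfloor(-1)^{i-1}\frac{d_{i-1}}{d_n}\kappa\rfloor$; $c^{(n)}_\kappa=\prod_{l=1}^n\Gamma(1-\omega^{(n)}_{\kappa,l})\cdot\prod_{i=1}^m(1-\mathbf{e}[\omega^{(n)}_{\kappa,2i-1}])$ if $n=2m-1$ and $c^{(n)}_\kappa=\prod_{l=1}^n\Gamma(1-\omega^{(n)}_{\kappa,l})\cdot\prod_{i=1}^m(1-\mathbf{e}[\omega^{(n)}_{\kappa,2i}])$ if $n=2m$. $p_n(t)=\prod_{i=1}^n(1-t^{d_{i-1}})^{(-1)^{n-i}}$ (a polynomial in $t$). *)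

theory Defs
  imports "HOL-Analysis.Analysis" "HOL-Computational_Algebra.Polynomial"
begin

text \<open>The sequence a_1,...,a_n is given as a function a :: nat => nat (only a 1 .. a n matter).\<close>

definition dd :: "(nat \<Rightarrow> nat) \<Rightarrow> nat \<Rightarrow> nat" where
  "dd a i = (\<Prod>j\<in>{1..i}. a j)"

definition ee :: "real \<Rightarrow> complex" where
  "ee \<alpha> = exp (2 * of_real pi * \<i> * of_real \<alpha>)"

definition Iprime :: "(nat \<Rightarrow> nat) \<Rightarrow> nat \<Rightarrow> nat set" where
  "Iprime a n = {\<kappa>. \<kappa> \<in> {1..dd a n} \<and> \<not> (a n dvd \<kappa>)}"

definition omega :: "(nat \<Rightarrow> nat) \<Rightarrow> nat \<Rightarrow> nat \<Rightarrow> nat \<Rightarrow> real" where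
  "omega a n \<kappa> i =
     (let x = (-1) ^ (i - 1) * (real (dd a (i - 1)) / real (dd a n)) * real \<kappa>
      in x - of_int \<lfloor>x\<rfloor>)"

definition cc :: "(nat \<Rightarrow> nat) \<Rightarrow> nat \<Rightarrow> nat \<Rightarrow> complex" where
  "cc a n \<kappa> =
     complex_of_real (\<Prod>l\<in>{1..n}. Gamma (1 - omega a n \<kappa> l)) *
     (if odd n then (\<Prod>i\<in>{1..(n + 1) div 2}. 1 - ee (omega a n \<kappa> (2 * i - 1)))
      else (\<Prod>i\<in>{1..n div 2}. 1 - ee (omega a n \<kappa> (2 * i))))"

text \<open>p_n(t) = prod_{i=1}^n (1 - t^{d_{i-1}})^{(-1)^{n-i}}, which is a polynomial; it is
  realised as the exact quotient of the numerator factors (n-i even) by the denominator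
  factors (n-i odd) in the polynomial ring.\<close>
definition pp :: "(nat \<Rightarrow> nat) \<Rightarrow> nat \<Rightarrow> complex poly" where
  "pp a n =
     (\<Prod>i\<in>{i\<in>{1..n}. even (n - i)}. 1 - monom 1 (dd a (i - 1))) div
     (\<Prod>i\<in>{i\<in>{1..n}. odd (n - i)}. 1 - monom 1 (dd a (i - 1)))"

end

theory Submission
  imports Defs
begin

(* Write w_l for omega_{kappa,l}. As a_n does not divide kappa, no w_l is an integer, and
   omega_{d_n - kappa,l} = 1 - w_l. So c_kappa and c_{d_n - kappa} pair each Gamma(1 - w_l) with
   Gamma(w_l), and the reflection formula, in the form
   Gamma(w) Gamma(1 - w) (1 - e[-w]) e[(w - 1/2)/2] = 2 pi, cancels the factor (2 pi)^n. What is
   left is the product of 1 - e[w_i] over n - i even divided by the product of 1 - e[-w_i] over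
   n - i odd. On the other side t = e[(-1)^(n-1) w_1] satisfies t^(d_(i-1)) = e[(-1)^(n-i) w_i],
   so p_n(t) is the same quotient. *)

lemma ee_cis: "ee y = cis (2 * pi * y)"
  unfolding ee_def cis_conv_exp by (simp add: mult_ac)

lemma ee_add: "ee (x + y) = ee x * ee y"
  by (simp add: ee_cis cis_mult distrib_left)

lemma ee_sum: "finite A \<Longrightarrow> ee (\<Sum>x\<in>A. f x) = (\<Prod>x\<in>A. ee (f x))"
  by (induction A rule: finite_induct) (simp_all add: ee_add, simp add: ee_cis)

lemma ee_power: "ee y ^ m = ee (real m * y)"
  by (simp only: ee_cis Complex.DeMoivre) (simp add: mult_ac)

lemma ee_eq_1_iff: "ee y = 1 \<longleftrightarrow> y \<in> \<int>"
proof
  assume "ee y = 1"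
  then obtain m :: int where "2 * pi * y = of_int (2 * m) * pi"
    by (auto simp: ee_def exp_eq_1)
  then show "y \<in> \<int>" by simp
qed (auto elim: Ints_cases simp: ee_def exp_eq_1)

lemma ee_eq_if_diff_Ints: "x - y \<in> \<int> \<Longrightarrow> ee x = ee y"
  using ee_add[of y "x - y"] by (simp add: ee_eq_1_iff)

lemma ee_Ints_mult_frac: "k \<in> \<int> \<Longrightarrow> ee (k * frac x) = ee (k * x)"
  by (rule ee_eq_if_diff_Ints) (simp add: frac_def right_diff_distrib)

lemma Gamma_reflection_ee:
  fixes w :: real
  assumes "w \<notin> \<int>"
  shows "of_real (Gamma (1 - w)) * of_real (Gamma w) * (1 - ee (- w)) * ee ((1/2) * (w - 1/2))
         = 2 * complex_of_real pi"
proof -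
  have sin_nz: "sin (pi * w) \<noteq> 0"
    using assms by (auto simp: sin_zero_iff_int2)
  have "complex_of_real (Gamma w * Gamma (1 - w)) = of_real (pi / sin (pi * w))"
    using Gamma_reflection_complex[of "of_real w"]
    by (simp flip: Gamma_complex_of_real sin_of_real)
  then have Gamma_prod: "Gamma w * Gamma (1 - w) = pi / sin (pi * w)"
    by (simp only: of_real_eq_iff)
  have "(1 - ee (- w)) * ee ((1/2) * (w - 1/2)) = cis (pi * w - pi/2) - cis (- pi * w - pi/2)"
    by (simp add: ee_add[symmetric] ring_distribs) (simp add: ee_cis algebra_simps)
  also have "\<dots> = 2 * of_real (sin (pi * w))"
    by (simp add: complex_eq_iff cos_diff sin_diff)
  finally show ?thesis
    using sin_nz by (simp add: Gamma_prod mult_ac flip: of_real_mult)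
qed

lemma prod_Gamma_reflection_ee:
  fixes w :: "'a \<Rightarrow> real"
  assumes "finite L" "\<And>l. l \<in> L \<Longrightarrow> w l \<notin> \<int>"
  shows "(\<Prod>l\<in>L. of_real (Gamma (1 - w l)) * of_real (Gamma (w l)) * (1 - ee (- w l)))
           * ee ((1/2) * (\<Sum>l\<in>L. w l - 1/2))
         = (2 * complex_of_real pi) ^ card L"
proof -
  have "ee ((1/2) * (\<Sum>l\<in>L. w l - 1/2)) = (\<Prod>l\<in>L. ee ((1/2) * (w l - 1/2)))"
    using assms(1) by (simp add: sum_distrib_left ee_sum)
  then have "(\<Prod>l\<in>L. of_real (Gamma (1 - w l)) * of_real (Gamma (w l)) * (1 - ee (- w l)))
           * ee ((1/2) * (\<Sum>l\<in>L. w l - 1/2))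
      = (\<Prod>l\<in>L. of_real (Gamma (1 - w l)) * of_real (Gamma (w l)) * (1 - ee (- w l))
           * ee ((1/2) * (w l - 1/2)))"
    by (simp only: prod.distrib)
  also have "\<dots> = (\<Prod>l\<in>L. 2 * complex_of_real pi)"
    using assms(2) by (intro prod.cong refl Gamma_reflection_ee)
  finally show ?thesis
    by simp
qed

lemma dd_0 [simp]: "dd a 0 = 1"
  by (simp add: dd_def)

lemma dd_Suc: "dd a (Suc m) = dd a m * a (Suc m)"
  unfolding dd_def by (simp add: prod.nat_ivl_Suc' mult_ac)

lemma dd_dvd_dd: "j \<le> k \<Longrightarrow> dd a j dvd dd a k"
  unfolding dd_def by (intro prod_dvd_prod_subset) auto

lemma dd_pos: "\<forall>i\<in>{1..j}. 0 < a i \<Longrightarrow> 0 < dd a j"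
  unfolding dd_def by (rule prod_pos) auto

lemma of_nat_div_in_Ints_iff:
  assumes "0 < m"
  shows "real k / real m \<in> \<int> \<longleftrightarrow> m dvd k"
proof
  assume "real k / real m \<in> \<int>"
  then obtain z where "real k / real m = of_int z"
    by (elim Ints_cases)
  then have "real_of_int (int k) = real_of_int (z * int m)"
    using assms by (simp add: divide_eq_eq)
  then have "int m dvd int k"
    by (simp only: of_int_eq_iff) simp
  then show "m dvd k"
    by simp
qed (use assms in \<open>auto elim!: dvdE\<close>)

lemma omega_eq_frac:
  "omega a n \<kappa> i = frac ((-1) ^ (i - 1) * (real (dd a (i - 1)) / real (dd a n)) * real \<kappa>)"
  by (simp add: omega_def frac_def Let_def)

lemma dd_ratio_not_Ints:
  assumes pos: "\<forall>i\<in>{1..n}. 0 < a i" and not_dvd: "\<not> a n dvd \<kappa>"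
    and l: "l \<in> {1..n}"
  shows "real (dd a (l - 1)) / real (dd a n) * real \<kappa> \<notin> \<int>"
proof
  have "dd a (l - 1) dvd dd a (n - 1)"
    using l by (intro dd_dvd_dd) auto
  then obtain q where q: "dd a (n - 1) = dd a (l - 1) * q"
    by (elim dvdE)
  have dd_n: "dd a n = dd a (l - 1) * (q * a n)"
    using dd_Suc[of a "n - 1"] l q by (simp add: mult_ac)
  have "0 < dd a (l - 1) * (q * a n)"
    unfolding dd_n[symmetric] using pos by (rule dd_pos)
  then have q_pos: "0 < q * a n" and "0 < dd a (l - 1)"
    by (simp_all add: zero_less_mult_iff)
  then have "real (dd a (l - 1)) / real (dd a n) * real \<kappa> = real \<kappa> / real (q * a n)"
    by (simp add: dd_n)
  moreover assume "real (dd a (l - 1)) / real (dd a n) * real \<kappa> \<in> \<int>"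
  ultimately have "q * a n dvd \<kappa>"
    using of_nat_div_in_Ints_iff[OF q_pos] by metis
  then show False
    using not_dvd by (auto dest: dvd_mult_left)
qed

lemma omega_not_Ints:
  assumes "\<forall>i\<in>{1..n}. 0 < a i" "\<not> a n dvd \<kappa>" "l \<in> {1..n}"
  shows "omega a n \<kappa> l \<notin> \<int>"
  using dd_ratio_not_Ints[of n a \<kappa> l] assms
  by (cases "even (l - 1)") (simp_all add: omega_eq_frac mult.assoc)

lemma omega_complement:
  assumes pos: "\<forall>i\<in>{1..n}. 0 < a i" and not_dvd: "\<not> a n dvd \<kappa>"
    and l: "l \<in> {1..n}" and "\<kappa> \<le> dd a n"
  shows "omega a n (dd a n - \<kappa>) l = 1 - omega a n \<kappa> l"
proof -
  define x where "x = (-1) ^ (l - 1) * (real (dd a (l - 1)) / real (dd a n)) * real \<kappa>"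
  have "(-1) ^ (l - 1) * (real (dd a (l - 1)) / real (dd a n)) * real (dd a n - \<kappa>)
        = of_int ((-1) ^ (l - 1) * int (dd a (l - 1))) + - x"
    using dd_pos[of n a] pos \<open>\<kappa> \<le> dd a n\<close> by (simp add: x_def of_nat_diff field_simps)
  then have "omega a n (dd a n - \<kappa>) l = frac (- x)"
    by (simp only: omega_eq_frac frac_add_of_int_left)
  also have "\<dots> = 1 - omega a n \<kappa> l"
    using omega_not_Ints[of n a \<kappa> l] pos not_dvd l by (simp add: frac_neg x_def omega_eq_frac)
  finally show ?thesis .
qed

lemma ee_omega_power:
  assumes "i \<in> {1..n}"
  shows "ee ((-1) ^ (n - 1) * omega a n \<kappa> 1) ^ dd a (i - 1)
         = ee ((-1) ^ (n - i) * omega a n \<kappa> i)"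
proof -
  have sign: "(-1::real) ^ (n - 1) = (-1) ^ (n - i) * (-1) ^ (i - 1)"
    using assms by (simp flip: power_add)
  have "ee ((-1) ^ (n - 1) * omega a n \<kappa> 1) ^ dd a (i - 1)
        = ee ((real (dd a (i - 1)) * (-1) ^ (n - 1)) * frac (real \<kappa> / real (dd a n)))"
    by (simp add: ee_power omega_eq_frac mult_ac)
  also have "\<dots> = ee ((real (dd a (i - 1)) * (-1) ^ (n - 1)) * (real \<kappa> / real (dd a n)))"
    by (rule ee_Ints_mult_frac) simp
  also have "\<dots> = ee ((-1) ^ (n - i)
                     * ((-1) ^ (i - 1) * (real (dd a (i - 1)) / real (dd a n)) * real \<kappa>))"
    by (subst sign) (simp add: mult_ac)
  also have "\<dots> = ee ((-1) ^ (n - i) * omega a n \<kappa> i)"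
    unfolding omega_eq_frac by (rule ee_Ints_mult_frac[symmetric]) simp
  finally show ?thesis .
qed

lemma prod_parity_reindex:
  fixes n :: nat
  shows "(if odd n then (\<Prod>i\<in>{1..(n + 1) div 2}. f (2 * i - 1)) else (\<Prod>i\<in>{1..n div 2}. f (2 * i)))
   = (\<Prod>i\<in>{i\<in>{1..n}. even (n - i)}. f i)"
proof (cases "odd n")
  case True
  have "(\<Prod>i\<in>{1..(n + 1) div 2}. f (2 * i - 1)) = (\<Prod>i\<in>{i\<in>{1..n}. even (n - i)}. f i)"
    by (rule prod.reindex_bij_witness[where i="\<lambda>i. (i + 1) div 2" and j="\<lambda>i. 2 * i - 1"])
       (use True in \<open>auto; presburger\<close>)+
  with True show ?thesis by simp
next
  case False
  have "(\<Prod>i\<in>{1..n div 2}. f (2 * i)) = (\<Prod>i\<in>{i\<in>{1..n}. even (n - i)}. f i)"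
    by (rule prod.reindex_bij_witness[where i="\<lambda>i. i div 2" and j="\<lambda>i. 2 * i"])
       (use False in \<open>auto; presburger\<close>)+
  with False show ?thesis by simp
qed

lemma cc_eq_prod_even:
  "cc a n \<kappa> = of_real (\<Prod>l\<in>{1..n}. Gamma (1 - omega a n \<kappa> l))
                * (\<Prod>i\<in>{i\<in>{1..n}. even (n - i)}. 1 - ee (omega a n \<kappa> i))"
  unfolding cc_def prod_parity_reindex[of n "\<lambda>i. 1 - ee (omega a n \<kappa> i)"] ..

lemma one_minus_monom_dvd:
  "k dvd m \<Longrightarrow> (1 - monom (1::'a::comm_ring_1) k) dvd (1 - monom 1 m)"
  by (elim dvdE) (metis dvdI monom_power one_diff_power_eq power_one)

lemma pp_denominator_dvd_numerator:
  "(\<Prod>i\<in>{i\<in>{1..n}. odd (n - i)}. 1 - monom (1::'a::comm_ring_1) (dd a (i - 1)))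
   dvd (\<Prod>i\<in>{i\<in>{1..n}. even (n - i)}. 1 - monom 1 (dd a (i - 1)))"
proof -
  let ?f = "\<lambda>i. 1 - monom (1::'a) (dd a (i - 1))"
  let ?odd = "{i\<in>{1..n}. odd (n - i)}"
  have "prod ?f ?odd dvd (\<Prod>i\<in>?odd. ?f (Suc i))"
    by (rule prod_dvd_prod) (auto intro!: one_minus_monom_dvd dd_dvd_dd)
  also have "\<dots> = prod ?f (Suc ` ?odd)"
    by (simp add: prod.reindex)
  also have "\<dots> dvd prod ?f {i\<in>{1..n}. even (n - i)}"
    by (rule prod_dvd_prod_subset) (auto, presburger+)
  finally show ?thesis .
qed

lemma poly_div_eq_divide:
  fixes p q :: "'a::field poly"
  assumes "q dvd p" "poly q t \<noteq> 0"
  shows "poly (p div q) t = poly p t / poly q t"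
  using assms by (elim dvdE) (auto simp: poly_mult)

lemma poly_pp:
  assumes "(\<Prod>i\<in>{i\<in>{1..n}. odd (n - i)}. 1 - t ^ dd a (i - 1)) \<noteq> 0"
  shows "poly (pp a n) t = (\<Prod>i\<in>{i\<in>{1..n}. even (n - i)}. 1 - t ^ dd a (i - 1))
                         / (\<Prod>i\<in>{i\<in>{1..n}. odd (n - i)}. 1 - t ^ dd a (i - 1))"
proof -
  have poly_factors:
    "poly (\<Prod>i\<in>I. 1 - monom 1 (dd a (i - 1))) t = (\<Prod>i\<in>I. 1 - t ^ dd a (i - 1))" for I
    by (simp add: poly_prod poly_monom)
  show ?thesis
    unfolding pp_def
    by (rule poly_div_eq_divide[OF pp_denominator_dvd_numerator[where n = n and a = a], of t,
          unfolded poly_factors])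
       (rule assms)
qed

lemma cc_complement:
  assumes pos: "\<forall>i\<in>{1..n}. 0 < a i" and not_dvd: "\<not> a n dvd \<kappa>"
    and "\<kappa> \<le> dd a n"
  shows "cc a n (dd a n - \<kappa>) = of_real (\<Prod>l\<in>{1..n}. Gamma (omega a n \<kappa> l))
           * (\<Prod>i\<in>{i\<in>{1..n}. even (n - i)}. 1 - ee (- omega a n \<kappa> i))"
proof -
  have complement: "omega a n (dd a n - \<kappa>) l = 1 - omega a n \<kappa> l" if "l \<in> {1..n}" for l
    using omega_complement[of n a \<kappa> l] assms that by blast
  have ee_complement: "ee (1 - omega a n \<kappa> l) = ee (- omega a n \<kappa> l)" for l
    by (rule ee_eq_if_diff_Ints) simp
  show ?thesis
    unfolding cc_eq_prod_even
    by (intro arg_cong2[where f = "(*)"] arg_cong[where f = of_real] prod.cong refl)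
       (auto simp: complement ee_complement)
qed

lemma poly_pp_ee_omega:
  assumes "\<forall>i\<in>{1..n}. 0 < a i" "\<not> a n dvd \<kappa>"
  shows "poly (pp a n) (ee ((-1) ^ (n - 1) * omega a n \<kappa> 1))
         = (\<Prod>i\<in>{i\<in>{1..n}. even (n - i)}. 1 - ee (omega a n \<kappa> i))
           / (\<Prod>i\<in>{i\<in>{1..n}. odd (n - i)}. 1 - ee (- omega a n \<kappa> i))"
proof -
  let ?t = "ee ((-1) ^ (n - 1) * omega a n \<kappa> 1)"
  have power_even: "?t ^ dd a (i - 1) = ee (omega a n \<kappa> i)" if "i \<in> {1..n}" "even (n - i)" for i
    using ee_omega_power[OF that(1)] that(2) by simp
  have power_odd: "?t ^ dd a (i - 1) = ee (- omega a n \<kappa> i)" if "i \<in> {1..n}" "odd (n - i)" for i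
    using ee_omega_power[OF that(1)] that(2) by simp
  have even_factors: "(\<Prod>i\<in>{i\<in>{1..n}. even (n - i)}. 1 - ?t ^ dd a (i - 1))
                      = (\<Prod>i\<in>{i\<in>{1..n}. even (n - i)}. 1 - ee (omega a n \<kappa> i))"
    using power_even by (intro prod.cong) auto
  have odd_factors: "(\<Prod>i\<in>{i\<in>{1..n}. odd (n - i)}. 1 - ?t ^ dd a (i - 1))
                     = (\<Prod>i\<in>{i\<in>{1..n}. odd (n - i)}. 1 - ee (- omega a n \<kappa> i))"
    using power_odd by (intro prod.cong) auto
  have "(\<Prod>i\<in>{i\<in>{1..n}. odd (n - i)}. 1 - ee (- omega a n \<kappa> i)) \<noteq> 0"
    using omega_not_Ints[of n a \<kappa>] assms by (simp add: ee_eq_1_iff)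
  then show ?thesis
    unfolding even_factors[symmetric] odd_factors[symmetric] by (rule poly_pp)
qed

lemma cc_mult_cc_complement:
  assumes pos: "\<forall>i\<in>{1..n}. 0 < a i" and not_dvd: "\<not> a n dvd \<kappa>" and "\<kappa> \<le> dd a n"
  shows "cc a n \<kappa> * ee ((1/2) * (\<Sum>l\<in>{1..n}. omega a n \<kappa> l - 1/2)) * cc a n (dd a n - \<kappa>)
         = (2 * complex_of_real pi) ^ n
           * ((\<Prod>i\<in>{i\<in>{1..n}. even (n - i)}. 1 - ee (omega a n \<kappa> i))
              / (\<Prod>i\<in>{i\<in>{1..n}. odd (n - i)}. 1 - ee (- omega a n \<kappa> i)))"
proof -
  let ?w = "omega a n \<kappa>"
  let ?even = "{i\<in>{1..n}. even (n - i)}" and ?odd = "{i\<in>{1..n}. odd (n - i)}"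
  have not_Ints: "\<And>l. l \<in> {1..n} \<Longrightarrow> ?w l \<notin> \<int>"
    using omega_not_Ints[of n a \<kappa>] pos not_dvd by blast
  have "(\<Prod>l\<in>{1..n}. 1 - ee (- ?w l))
        = (\<Prod>i\<in>?even. 1 - ee (- ?w i)) * (\<Prod>i\<in>?odd. 1 - ee (- ?w i))"
    by (subst prod.union_disjoint[symmetric]) (auto intro: prod.cong)
  then have reflection:
    "of_real (\<Prod>l\<in>{1..n}. Gamma (1 - ?w l)) * of_real (\<Prod>l\<in>{1..n}. Gamma (?w l))
       * ((\<Prod>i\<in>?even. 1 - ee (- ?w i)) * (\<Prod>i\<in>?odd. 1 - ee (- ?w i)))
       * ee ((1/2) * (\<Sum>l\<in>{1..n}. ?w l - 1/2)) = (2 * complex_of_real pi) ^ n"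
    using prod_Gamma_reflection_ee[of "{1..n}" ?w] not_Ints by (simp add: prod.distrib)
  have odd_nonzero: "(\<Prod>i\<in>?odd. 1 - ee (- ?w i)) \<noteq> 0"
    using not_Ints by (simp add: ee_eq_1_iff)
  have rearrange: "G1 * A * X * (G2 * B) = P * (A / C)"
    if "G1 * G2 * (B * C) * X = P" "C \<noteq> 0" for G1 G2 A B C X P :: complex
    using that by (simp add: that(1)[symmetric] field_simps)
  show ?thesis
    unfolding cc_eq_prod_even[of a n \<kappa>] cc_complement[OF assms]
    by (rule rearrange[OF reflection odd_nonzero])
qed

theorem lemma4p1:
  fixes a :: "nat \<Rightarrow> nat" and n \<kappa> :: nat
  assumes "\<forall>i\<in>{1..n}. a i \<ge> 2"
    and "n \<ge> 1"
    and "\<kappa> \<in> Iprime a n"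
  shows "1 / (2 * of_real pi) ^ n * cc a n \<kappa>
           * ee ((1/2) * (\<Sum>l\<in>{1..n}. omega a n \<kappa> l - 1/2))
           * (1 / of_nat (dd a n)) * cc a n (dd a n - \<kappa>)
         = 1 / of_nat (dd a n) * poly (pp a n) (ee ((-1) ^ (n - 1) * omega a n \<kappa> 1))"
proof -
  have pos: "\<forall>i\<in>{1..n}. 0 < a i"
    using assms(1) by fastforce
  have not_dvd: "\<not> a n dvd \<kappa>" and "\<kappa> \<le> dd a n"
    using assms(3) by (auto simp: Iprime_def)
  have "cc a n \<kappa> * ee ((1/2) * (\<Sum>l\<in>{1..n}. omega a n \<kappa> l - 1/2)) * cc a n (dd a n - \<kappa>)
        = (2 * complex_of_real pi) ^ n * poly (pp a n) (ee ((-1) ^ (n - 1) * omega a n \<kappa> 1))"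
    by (simp only: cc_mult_cc_complement[OF pos not_dvd \<open>\<kappa> \<le> dd a n\<close>]
        poly_pp_ee_omega[OF pos not_dvd])
  then show ?thesis
    by (simp add: field_simps)
qed

end
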